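(* Let $X$ be a set of cardinality at least $2^{\aleph_0}$, considered as a discrete topological space. Then for every formula $A$ of $\mathcal{L}_\nabla$: (i) if $X\vDash_{i\mathbf{ST}}A$ then $i\mathbf{STL}\vdash A$; (ii) if $X\vDash_{i\mathbf{ST}(F)}A$ then $i\mathbf{STL}(F)\vdash A$; (iii) if $X\vDash_{i\mathbf{ST}(wF)}A$ then $i\mathbf{STL}(wF)\vdash A$.
   Context: Formulas of $\mathcal{L}_\nabla$ are built from variables and constants $1,\top,\bot$ by $\wedge,\vee,\otimes,\to$ and unary $\nabla$. Sequents $\Gamma\Rightarrow A$ have $\Gamma$ a finite sequence; $\nabla\Gamma$ applies $\nabla$ to each member; "$L\vdash A$" means $L$ derives $\Rightarrow A$. $\mathbf{STL}$ has axioms $A\Rightarrow A$, $\Rightarrow1$, $\nabla1\Rightarrow1$, $\Gamma\Rightarrow\top$, $\Gamma,\bot,\Sigma\Rightarrow A$ and rules (premises / conclusion): cut: $\Gamma\Rightarrow A$, $\Pi,A,\Sigma\Rightarrow B$ / $\Pi,\Gamma,\Sigma\Rightarrow B$; $L\wedge$: $\Gamma,A,\Sigma\Rightarrow C$ / $\Gamma,A\wedge B,\Sigma\Rightarrow C$ and $\Gamma,B,\Sigma\Rightarrow C$ / $\Gamma,A\wedge B,\Sigma\Rightarrow C$; $R\wedge$: $\Gamma\Rightarrow A$, $\Gamma\Rightarrow B$ / $\Gamma\Rightarrow A\wedge B$; $L\vee$: $\Gamma,A,\Sigma\Rightarrow C$, $\Gamma,B,\Sigma\Rightarrow C$ / $\Gamma,A\vee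 B,\Sigma\Rightarrow C$; $R\vee$: $\Gamma\Rightarrow A$ / $\Gamma\Rightarrow A\vee B$ and $\Gamma\Rightarrow B$ / $\Gamma\Rightarrow A\vee B$; $L1$: $\Gamma,\Sigma\Rightarrow A$ / $\Gamma,1,\Sigma\Rightarrow A$; $L\otimes$: $\Gamma,A,B,\Sigma\Rightarrow C$ / $\Gamma,A\otimes B,\Sigma\Rightarrow C$; $R\otimes$: $\Gamma\Rightarrow A$, $\Sigma\Rightarrow B$ / $\Gamma,\Sigma\Rightarrow A\otimes B$; $(\nabla)$: $A\Rightarrow B$ / $\nabla A\Rightarrow\nabla B$; Oplax: $\nabla A,\nabla B\Rightarrow C$ / $\nabla(A\otimes B)\Rightarrow C$; $L\to$: $\Gamma\Rightarrow A$, $\Pi,B,\Sigma\Rightarrow C$ / $\Pi,\Gamma,\nabla(A\to B),\Sigma\Rightarrow C$; $R\to$: $A,\nabla\Gamma\Rightarrow B$ / $\Gamma\Rightarrow A\to B$. Scheme $(F)$: $\Gamma\Rightarrow A$ / $\Gamma\Rightarrow\nabla A$; scheme $(wF)$: $\nabla A\Rightarrow\bot$ / $A\Rightarrow\bot$. $i\mathbf{STL}$ is $\mathbf{STL}$ plus left weakening, contraction and exchange; $i\mathbf{STL}(F)$, $i\mathbf{STL}(wF)$ add the respective scheme. For a space $Z$ and a union-preserving $\nabla:\mathcal{O}(Z)\to\mathcal{O}(Z)$, the implication is $W_1\to W_2=\Box(W_1\Rightarrow W_2)$ with $\Box$ the right adjoint of $\nabla$ and $\Rightarrow$ the Heyting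 implication (equivalently $W_1\cap\nabla W_2\subseteq W_3$ iff $W_2\subseteq W_1\to W_3$). A valuation of variables in $\mathcal{O}(Z)$ extends by $1,\top\mapsto Z$, $\bot\mapsto\emptyset$, $\wedge,\otimes\mapsto\cap$, $\vee\mapsto\cup$, $\nabla\mapsto\nabla$, $\to\mapsto\to$. $i\mathbf{ST}$ is the class of all such $(\mathcal{O}(Z),\nabla)$, $i\mathbf{ST}(F)$ those with $W\subseteq\nabla W$, $i\mathbf{ST}(wF)$ those with $\nabla W=\emptyset\Rightarrow W=\emptyset$. $Z\vDash_{\mathcal{C}}A$ means $V(A)=Z$ for every $\nabla$ with $(\mathcal{O}(Z),\nabla)\in\mathcal{C}$ and every valuation $V$. *)

theory Defs
  imports Main
begin

datatype fm =
    Var nat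
  | One
  | Top
  | Bot
  | And fm fm
  | Or fm fm
  | Tens fm fm
  | Imp fm fm
  | Nab fm

datatype logic = iSTL | iSTL_F | iSTL_wF

text \<open>All three logics contain STL plus left weakening, contraction and exchange;
  the scheme (F) is available only in iSTL_F, the scheme (wF) only in iSTL_wF.\<close>
inductive deriv :: "logic \<Rightarrow> fm list \<Rightarrow> fm \<Rightarrow> bool" for L :: logic where
  ax: "deriv L [A] A"
| oneR: "deriv L [] One"
| nabOne: "deriv L [Nab One] One"
| topR: "deriv L G Top"
| botL: "deriv L (G @ Bot # S) A"
| cut: "deriv L G A \<Longrightarrow> deriv L (P @ A # S) B \<Longrightarrow> deriv L (P @ G @ S) B"
| andL1: "deriv L (G @ A # S) C \<Longrightarrow> deriv L (G @ And A B # S) C"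
| andL2: "deriv L (G @ B # S) C \<Longrightarrow> deriv L (G @ And A B # S) C"
| andR: "deriv L G A \<Longrightarrow> deriv L G B \<Longrightarrow> deriv L G (And A B)"
| orL: "deriv L (G @ A # S) C \<Longrightarrow> deriv L (G @ B # S) C \<Longrightarrow> deriv L (G @ Or A B # S) C"
| orR1: "deriv L G A \<Longrightarrow> deriv L G (Or A B)"
| orR2: "deriv L G B \<Longrightarrow> deriv L G (Or A B)"
| oneL: "deriv L (G @ S) A \<Longrightarrow> deriv L (G @ One # S) A"
| tensL: "deriv L (G @ A # B # S) C \<Longrightarrow> deriv L (G @ Tens A B # S) C"
| tensR: "deriv L G A \<Longrightarrow> deriv L S B \<Longrightarrow> deriv L (G @ S) (Tens A B)"
| nab: "deriv L [A] B \<Longrightarrow> deriv L [Nab A] (Nab B)"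
| oplax: "deriv L [Nab A, Nab B] C \<Longrightarrow> deriv L [Nab (Tens A B)] C"
| impL: "deriv L G A \<Longrightarrow> deriv L (P @ B # S) C \<Longrightarrow> deriv L (P @ G @ Nab (Imp A B) # S) C"
| impR: "deriv L (A # map Nab G) B \<Longrightarrow> deriv L G (Imp A B)"
| weakL: "deriv L (G @ S) A \<Longrightarrow> deriv L (G @ B # S) A"
| contrL: "deriv L (G @ B # B # S) A \<Longrightarrow> deriv L (G @ B # S) A"
| exchL: "deriv L (G @ B # C # S) A \<Longrightarrow> deriv L (G @ C # B # S) A"
| schemeF: "L = iSTL_F \<Longrightarrow> deriv L G A \<Longrightarrow> deriv L G (Nab A)"
| schemewF: "L = iSTL_wF \<Longrightarrow> deriv L [Nab A] Bot \<Longrightarrow> deriv L [A] Bot"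

definition provable :: "logic \<Rightarrow> fm \<Rightarrow> bool" where
  "provable L A \<longleftrightarrow> deriv L [] A"

text \<open>Semantics on the discrete space X: the opens are all subsets of X.\<close>
definition opens :: "'a set \<Rightarrow> 'a set set" where
  "opens X = Pow X"

definition union_pres :: "'a set \<Rightarrow> ('a set \<Rightarrow> 'a set) \<Rightarrow> bool" where
  "union_pres X N \<longleftrightarrow> (\<forall>U\<in>opens X. N U \<in> opens X) \<and>
     (\<forall>S. S \<subseteq> opens X \<longrightarrow> N (\<Union>S) = \<Union>(N ` S))"

definition boxop :: "'a set \<Rightarrow> ('a set \<Rightarrow> 'a set) \<Rightarrow> 'a set \<Rightarrow> 'a set" where
  "boxop X N W = \<Union>{U \<in> opens X. N U \<subseteq> W}"

definition heyt :: "'a set \<Rightarrow> 'a set \<Rightarrow> 'a set \<Rightarrow> 'a set" where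
  "heyt X W1 W2 = \<Union>{U \<in> opens X. U \<inter> W1 \<subseteq> W2}"

definition simp_imp :: "'a set \<Rightarrow> ('a set \<Rightarrow> 'a set) \<Rightarrow> 'a set \<Rightarrow> 'a set \<Rightarrow> 'a set" where
  "simp_imp X N W1 W2 = boxop X N (heyt X W1 W2)"

fun eval :: "'a set \<Rightarrow> ('a set \<Rightarrow> 'a set) \<Rightarrow> (nat \<Rightarrow> 'a set) \<Rightarrow> fm \<Rightarrow> 'a set" where
  "eval X N V (Var p) = V p"
| "eval X N V One = X"
| "eval X N V Top = X"
| "eval X N V Bot = {}"
| "eval X N V (And A B) = eval X N V A \<inter> eval X N V B"
| "eval X N V (Or A B) = eval X N V A \<union> eval X N V B"
| "eval X N V (Tens A B) = eval X N V A \<inter> eval X N V B"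
| "eval X N V (Imp A B) = simp_imp X N (eval X N V A) (eval X N V B)"
| "eval X N V (Nab A) = N (eval X N V A)"

definition in_class :: "logic \<Rightarrow> 'a set \<Rightarrow> ('a set \<Rightarrow> 'a set) \<Rightarrow> bool" where
  "in_class L X N \<longleftrightarrow> union_pres X N \<and>
     (L = iSTL_F \<longrightarrow> (\<forall>W\<in>opens X. W \<subseteq> N W)) \<and>
     (L = iSTL_wF \<longrightarrow> (\<forall>W\<in>opens X. N W = {} \<longrightarrow> W = {}))"

definition valid :: "'a set \<Rightarrow> logic \<Rightarrow> fm \<Rightarrow> bool" where
  "valid X L A \<longleftrightarrow> (\<forall>N V. in_class L X N \<longrightarrow> (\<forall>p. V p \<in> opens X) \<longrightarrow> eval X N V A = X)"

end

theory Submission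
  imports Defs "HOL-Library.Countable"
begin

text \<open>
  The proof is by a canonical model. Its points are the prime theories (sets of formulas that are
  deductively closed, omit \<open>Bot\<close> and have the disjunction property), and \<open>T\<close> sees \<open>D\<close> when
  \<open>\<nabla>T \<subseteq> D\<close>. Interpreting \<open>\<nabla>\<close> as the image under this relation turns \<open>\<rightarrow>\<close> into the box, along
  the relation, of the Heyting implication; so the truth lemma comes down to two existence
  statements for prime theories, both instances of a Lindenbaum lemma. Scheme (F) makes the
  relation reflexive and scheme (wF) makes it serial. Since there are only countably many
  formulas, there are at most continuum many prime theories, so \<open>X\<close> can be mapped onto them; a
  theory carried by several points of \<open>X\<close> does no harm.
\<close>

instance fm :: countable
  by countable_datatype

subsection \<open>Admissible rules of the sequent calculus\<close>

lemma deriv_append_left: "deriv L G C \<Longrightarrow> deriv L (H @ G) C"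
proof (induction H)
  case (Cons B H)
  then show ?case
    using deriv.weakL[of L "[]" "H @ G" C B] by simp
qed simp

lemma deriv_move_front: "deriv L (P @ G @ x # S) C \<Longrightarrow> deriv L (P @ x # G @ S) C"
proof (induction G arbitrary: P)
  case (Cons y G)
  have "deriv L ((P @ [y]) @ x # G @ S) C"
    using Cons.prems Cons.IH[of "P @ [y]"] by simp
  then show ?case
    using deriv.exchL[of L P y x "G @ S" C] by simp
qed simp

lemma deriv_contract_member:
  assumes "x \<in> set H" and "deriv L (H @ x # S) C"
  shows "deriv L (H @ S) C"
proof -
  obtain H1 H2 where H: "H = H1 @ x # H2"
    using assms(1) by (meson split_list)
  have "deriv L ((H1 @ [x]) @ x # H2 @ S) C"
    using assms(2) H deriv_move_front[of L "H1 @ [x]" H2 x S C] by simp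
  then have "deriv L (H1 @ x # H2 @ S) C"
    using deriv.contrL[of L H1 x "H2 @ S" C] by simp
  then show ?thesis
    using H by simp
qed

lemma deriv_contract_list: "set G \<subseteq> set H \<Longrightarrow> deriv L (H @ G @ S) C \<Longrightarrow> deriv L (H @ S) C"
proof (induction G)
  case (Cons x G)
  then show ?case
    using deriv_contract_member[of x H L "G @ S" C] by simp
qed simp

lemma deriv_weaken: "deriv L G C \<Longrightarrow> set G \<subseteq> set H \<Longrightarrow> deriv L H C"
  using deriv_append_left[of L G C H] deriv_contract_list[of G H L "[]" C] by simp

lemma deriv_cut_front: "deriv L G A \<Longrightarrow> deriv L (A # S) B \<Longrightarrow> deriv L (G @ S) B"
  using deriv.cut[of L G A "[]" S B] by simp

lemma deriv_cut_all:
  "(\<And>F. F \<in> set G \<Longrightarrow> deriv L [A] F) \<Longrightarrow> deriv L (H @ G) C \<Longrightarrow> A \<in> set H \<Longrightarrow> deriv L H C"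
proof (induction G arbitrary: H)
  case Nil
  then show ?case by simp
next
  case (Cons F G)
  have "deriv L (H @ [A] @ G) C"
    using deriv.cut[of L "[A]" F H G C] Cons.prems by simp
  then have "deriv L (H @ [A]) C"
    using Cons.IH[of "H @ [A]"] Cons.prems(1) by simp
  then show ?case
    using Cons.prems(3) deriv_weaken[of L "H @ [A]" C H] by simp
qed

lemma deriv_AndL1: "deriv L [And A B] A"
  using deriv.andL1[of L "[]" A "[]" A B] deriv.ax by simp

lemma deriv_AndL2: "deriv L [And A B] B"
  using deriv.andL2[of L "[]" B "[]" B A] deriv.ax by simp

lemma deriv_AndR: "deriv L [A, B] (And A B)"
  by (intro deriv.andR deriv_weaken[OF deriv.ax]) auto

lemma deriv_TensL1: "deriv L [Tens A B] A"
  using deriv.tensL[of L "[]" A B "[]" A] deriv_weaken[OF deriv.ax[of L A], of "[A, B]"] by simp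

lemma deriv_TensL2: "deriv L [Tens A B] B"
  using deriv.tensL[of L "[]" A B "[]" B] deriv_weaken[OF deriv.ax[of L B], of "[A, B]"] by simp

lemma deriv_TensR: "deriv L [A, B] (Tens A B)"
  using deriv.tensR[OF deriv.ax deriv.ax, of L A B] by simp

lemma deriv_OrL_single: "deriv L (A # G) C \<Longrightarrow> deriv L (B # G) C \<Longrightarrow> deriv L (Or A B # G) C"
  using deriv.orL[of L "[]" A G C B] by simp

lemma deriv_modus_ponens: "deriv L [A, Nab (Imp A B)] B"
  using deriv.impL[of L "[A]" A "[]" B "[]" B] deriv.ax by simp

text \<open>
  Rule \<open>(\<nabla>)\<close> only applies to sequents with one antecedent; \<open>\<nabla>\<close> is pushed through \<open>Bot\<close> and \<open>Or\<close>
  by passing through \<open>Top \<rightarrow> C\<close>, since \<open>\<nabla>(Top \<rightarrow> C) \<Rightarrow> C\<close> by \<open>(L\<rightarrow>)\<close>.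
\<close>

lemma deriv_Nab_Bot: "deriv L [Nab Bot] Bot"
proof -
  have "deriv L [Bot] (Imp Top Bot)"
    using deriv.botL[of L "[]" "[]"] by simp
  moreover have "deriv L [Nab (Imp Top Bot)] Bot"
    using deriv.impL[of L "[]" Top "[]" Bot "[]" Bot] deriv.topR deriv.ax by simp
  ultimately show ?thesis
    using deriv_cut_front[OF deriv.nab, of L Bot "Imp Top Bot" "[]" Bot] by simp
qed

lemma deriv_Nab_Or: "deriv L [Nab (Or A B)] (Or (Nab A) (Nab B))"
proof -
  let ?E = "Or (Nab A) (Nab B)"
  have "deriv L [Top, Nab A] ?E" "deriv L [Top, Nab B] ?E"
    by (intro deriv.orR1 deriv.orR2 deriv_weaken[OF deriv.ax]; simp)+
  then have "deriv L [A] (Imp Top ?E)" "deriv L [B] (Imp Top ?E)"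
    using deriv.impR[of L Top "[A]" ?E] deriv.impR[of L Top "[B]" ?E] by simp_all
  then have "deriv L [Nab (Or A B)] (Nab (Imp Top ?E))"
    using deriv_OrL_single[of L A "[]" "Imp Top ?E" B] deriv.nab by simp
  moreover have "deriv L [Nab (Imp Top ?E)] ?E"
    using deriv.impL[of L "[]" Top "[]" ?E "[]" ?E] deriv.topR deriv.ax by simp
  ultimately show ?thesis
    using deriv_cut_front[of L "[Nab (Or A B)]" "Nab (Imp Top ?E)" "[]" ?E] by simp
qed

fun Ands :: "fm list \<Rightarrow> fm" where
  "Ands [] = Top"
| "Ands (A # As) = And A (Ands As)"

lemma deriv_AndsR: "deriv L As (Ands As)"
proof (induction As)
  case (Cons A As)
  have "deriv L (A # As) A" "deriv L (A # As) (Ands As)"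
    using deriv_weaken[OF deriv.ax, of A "A # As"] deriv_weaken[OF Cons.IH, of "A # As"] by auto
  then show ?case
    by (simp add: deriv.andR)
qed (simp add: deriv.topR)

lemma deriv_AndsL: "A \<in> set As \<Longrightarrow> deriv L [Ands As] A"
proof (induction As)
  case (Cons B As)
  then show ?case
    using deriv_AndL1 deriv.andL2[of L "[]" "Ands As" "[]" A B] by auto
qed simp

subsection \<open>Prime theories and the Lindenbaum lemma\<close>

definition entails :: "logic \<Rightarrow> fm set \<Rightarrow> fm \<Rightarrow> bool" where
  "entails L T A \<longleftrightarrow> (\<exists>G. set G \<subseteq> T \<and> deriv L G A)"

definition prime_theory :: "logic \<Rightarrow> fm set \<Rightarrow> bool" where
  "prime_theory L T \<longleftrightarrow> (\<forall>A. entails L T A \<longrightarrow> A \<in> T) \<and> Bot \<notin> T \<and>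
     (\<forall>A B. Or A B \<in> T \<longrightarrow> A \<in> T \<or> B \<in> T)"

lemma entails_member: "A \<in> T \<Longrightarrow> entails L T A"
  unfolding entails_def using deriv.ax[of L A] by force

lemma entails_OrR1: "entails L T A \<Longrightarrow> entails L T (Or A B)"
  unfolding entails_def using deriv.orR1 by blast

lemma entails_OrR2: "entails L T B \<Longrightarrow> entails L T (Or A B)"
  unfolding entails_def using deriv.orR2 by blast

lemma entails_cut:
  assumes "entails L T A" and "entails L (insert A T) B"
  shows "entails L T B"
proof -
  obtain G where G: "set G \<subseteq> T" "deriv L G A"
    using assms(1) entails_def by blast
  obtain H where H: "set H \<subseteq> insert A T" "deriv L H B"
    using assms(2) entails_def by blast
  have "deriv L (A # removeAll A H) B"
    using H deriv_weaken[of L H B "A # removeAll A H"] by auto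
  then have "deriv L (G @ removeAll A H) B"
    by (rule deriv_cut_front[OF G(2)])
  then show ?thesis
    unfolding entails_def using G(1) H(1) by (intro exI[of _ "G @ removeAll A H"]) auto
qed

lemma entails_insert_Or:
  assumes "entails L (insert A T) C" and "entails L (insert B T) C"
  shows "entails L (insert (Or A B) T) C"
proof -
  obtain G where G: "set G \<subseteq> insert A T" "deriv L G C"
    using assms(1) entails_def by blast
  obtain H where H: "set H \<subseteq> insert B T" "deriv L H C"
    using assms(2) entails_def by blast
  let ?K = "removeAll A G @ removeAll B H"
  have "deriv L (A # ?K) C" "deriv L (B # ?K) C"
    using G H deriv_weaken[of L G C "A # ?K"] deriv_weaken[of L H C "B # ?K"] by auto
  then have "deriv L (Or A B # ?K) C"
    by (rule deriv_OrL_single)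
  then show ?thesis
    unfolding entails_def using G(1) H(1) by (intro exI[of _ "Or A B # ?K"]) auto
qed

lemma entails_Union_chain:
  assumes "entails L (\<Union>\<C>) A" and "\<C> \<noteq> {}" and "subset.chain \<A> \<C>"
  obtains T where "T \<in> \<C>" and "entails L T A"
proof -
  obtain G where G: "set G \<subseteq> \<Union>\<C>" "deriv L G A"
    using assms(1) entails_def by blast
  then obtain T where "T \<in> \<C>" "set G \<subseteq> T"
    using finite_subset_Union_chain[OF finite_set G(1) assms(2,3)] by blast
  then show thesis
    using that G(2) entails_def by blast
qed

lemma maximal_avoiding_prime_theory:
  assumes D0: "D0 \<in> I"
    and Or_closed: "\<And>C D. C \<in> I \<Longrightarrow> D \<in> I \<Longrightarrow> Or C D \<in> I"
    and avoids: "\<And>D. D \<in> I \<Longrightarrow> \<not> entails L M D"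
    and maximal: "\<And>A. (\<And>D. D \<in> I \<Longrightarrow> \<not> entails L (insert A M) D) \<Longrightarrow> A \<in> M"
  shows "prime_theory L M" and "M \<inter> I = {}"
proof -
  have closed: "A \<in> M" if "entails L M A" for A
    using maximal avoids entails_cut[OF that] by blast
  have "Bot \<notin> M"
  proof
    assume "Bot \<in> M"
    then have "entails L M D0"
      unfolding entails_def using deriv.botL[of L "[]" "[]" D0] by (intro exI[of _ "[Bot]"]) simp
    then show False
      using avoids D0 by blast
  qed
  moreover have "A \<in> M \<or> B \<in> M" if "Or A B \<in> M" for A B
  proof (rule ccontr)
    assume "\<not> (A \<in> M \<or> B \<in> M)"
    then obtain D1 D2 where "D1 \<in> I" "entails L (insert A M) D1"
      and "D2 \<in> I" "entails L (insert B M) D2"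
      using maximal by blast
    then have "entails L (insert (Or A B) M) (Or D1 D2)"
      by (intro entails_insert_Or entails_OrR1 entails_OrR2)
    then show False
      using that avoids Or_closed \<open>D1 \<in> I\<close> \<open>D2 \<in> I\<close> by (simp add: insert_absorb)
  qed
  ultimately show "prime_theory L M"
    unfolding prime_theory_def using closed by blast
  show "M \<inter> I = {}"
    using avoids entails_member by blast
qed

lemma lindenbaum:
  assumes "D0 \<in> I" and "\<And>C D. C \<in> I \<Longrightarrow> D \<in> I \<Longrightarrow> Or C D \<in> I"
    and "\<And>D. D \<in> I \<Longrightarrow> \<not> entails L T0 D"
  obtains T where "prime_theory L T" and "T0 \<subseteq> T" and "T \<inter> I = {}"
proof -
  define \<A> where "\<A> = {T. T0 \<subseteq> T \<and> (\<forall>D\<in>I. \<not> entails L T D)}"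
  have "\<exists>M\<in>\<A>. \<forall>T\<in>\<A>. M \<subseteq> T \<longrightarrow> T = M"
  proof (rule subset_Zorn_nonempty)
    show "\<A> \<noteq> {}"
      using assms(3) unfolding \<A>_def by blast
  next
    fix \<C> assume "\<C> \<noteq> {}" and chain: "subset.chain \<A> \<C>"
    then have "\<C> \<subseteq> \<A>"
      by (simp add: subset.chain_def)
    have "T0 \<subseteq> \<Union>\<C>"
      using \<open>\<C> \<noteq> {}\<close> \<open>\<C> \<subseteq> \<A>\<close> unfolding \<A>_def by blast
    moreover have "\<not> entails L (\<Union>\<C>) D" if "D \<in> I" for D
    proof
      assume "entails L (\<Union>\<C>) D"
      then obtain T where "T \<in> \<C>" "entails L T D"
        using entails_Union_chain[OF _ \<open>\<C> \<noteq> {}\<close> chain] by blast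
      then show False
        using \<open>\<C> \<subseteq> \<A>\<close> that unfolding \<A>_def by blast
    qed
    ultimately show "\<Union>\<C> \<in> \<A>"
      unfolding \<A>_def by blast
  qed
  then obtain M where "M \<in> \<A>" and maximal: "\<And>T. T \<in> \<A> \<Longrightarrow> M \<subseteq> T \<Longrightarrow> T = M"
    by blast
  then have "T0 \<subseteq> M" and avoids: "\<And>D. D \<in> I \<Longrightarrow> \<not> entails L M D"
    unfolding \<A>_def by auto
  have absorbs: "A \<in> M" if "\<And>D. D \<in> I \<Longrightarrow> \<not> entails L (insert A M) D" for A
  proof -
    have "insert A M \<in> \<A>"
      using that \<open>T0 \<subseteq> M\<close> unfolding \<A>_def by blast
    then show ?thesis
      using maximal by blast
  qed
  show thesis
    using that maximal_avoiding_prime_theory[OF assms(1,2) avoids absorbs] \<open>T0 \<subseteq> M\<close> by blast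
qed

lemma lindenbaum_omitting:
  assumes "\<not> entails L T0 B"
  obtains T where "prime_theory L T" and "T0 \<subseteq> T" and "B \<notin> T"
proof -
  let ?I = "{E. deriv L [E] B}"
  have "B \<in> ?I"
    by (simp add: deriv.ax)
  moreover have "Or C D \<in> ?I" if "C \<in> ?I" "D \<in> ?I" for C D
    using that deriv_OrL_single[of L C "[]" B D] by simp
  moreover have "\<not> entails L T0 E" if "E \<in> ?I" for E
  proof
    assume "entails L T0 E"
    moreover have "entails L (insert E T0) B"
      unfolding entails_def using that by (intro exI[of _ "[E]"]) simp
    ultimately show False
      using assms entails_cut by blast
  qed
  ultimately obtain T where "prime_theory L T" "T0 \<subseteq> T" "T \<inter> ?I = {}"
    by (rule lindenbaum)
  then show thesis
    using that \<open>B \<in> ?I\<close> by blast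
qed

lemma prime_theory_closed: "prime_theory L T \<Longrightarrow> set G \<subseteq> T \<Longrightarrow> deriv L G A \<Longrightarrow> A \<in> T"
  unfolding prime_theory_def entails_def by blast

lemma prime_theory_One: "prime_theory L T \<Longrightarrow> One \<in> T"
  using prime_theory_closed[of L T "[]"] deriv.oneR by simp

lemma prime_theory_Top: "prime_theory L T \<Longrightarrow> Top \<in> T"
  using prime_theory_closed[of L T "[]"] deriv.topR by simp

lemma prime_theory_Bot: "prime_theory L T \<Longrightarrow> Bot \<notin> T"
  unfolding prime_theory_def by blast

lemma prime_theory_And:
  assumes T: "prime_theory L T"
  shows "And A B \<in> T \<longleftrightarrow> A \<in> T \<and> B \<in> T"
proof
  assume "And A B \<in> T"
  then show "A \<in> T \<and> B \<in> T"
    using prime_theory_closed[OF T _ deriv_AndL1[of L A B]] prime_theory_closed[OF T _ deriv_AndL2[of L A B]]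
    by simp
next
  assume "A \<in> T \<and> B \<in> T"
  then show "And A B \<in> T"
    using prime_theory_closed[OF T _ deriv_AndR[of L A B]] by simp
qed

lemma prime_theory_Tens:
  assumes T: "prime_theory L T"
  shows "Tens A B \<in> T \<longleftrightarrow> A \<in> T \<and> B \<in> T"
proof
  assume "Tens A B \<in> T"
  then show "A \<in> T \<and> B \<in> T"
    using prime_theory_closed[OF T _ deriv_TensL1[of L A B]] prime_theory_closed[OF T _ deriv_TensL2[of L A B]]
    by simp
next
  assume "A \<in> T \<and> B \<in> T"
  then show "Tens A B \<in> T"
    using prime_theory_closed[OF T _ deriv_TensR[of L A B]] by simp
qed

lemma prime_theory_Or: "prime_theory L T \<Longrightarrow> Or A B \<in> T \<longleftrightarrow> A \<in> T \<or> B \<in> T"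
  unfolding prime_theory_def using entails_OrR1 entails_OrR2 entails_member by metis

subsection \<open>Relational interpretation of \<open>\<nabla>\<close>\<close>

definition rel_nabla :: "'a set \<Rightarrow> ('a \<Rightarrow> 'a \<Rightarrow> bool) \<Rightarrow> 'a set \<Rightarrow> 'a set" where
  "rel_nabla X R W = {y \<in> X. \<exists>x \<in> W \<inter> X. R x y}"

lemma union_pres_rel_nabla: "union_pres X (rel_nabla X R)"
  unfolding union_pres_def opens_def rel_nabla_def by auto

lemma boxop_rel_nabla: "boxop X (rel_nabla X R) W = {x \<in> X. \<forall>y \<in> X. R x y \<longrightarrow> y \<in> W}"
proof
  show "boxop X (rel_nabla X R) W \<subseteq> {x \<in> X. \<forall>y \<in> X. R x y \<longrightarrow> y \<in> W}"
  proof
    fix x assume "x \<in> boxop X (rel_nabla X R) W"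
    then obtain U where "U \<subseteq> X" "rel_nabla X R U \<subseteq> W" "x \<in> U"
      unfolding boxop_def opens_def by blast
    then show "x \<in> {x \<in> X. \<forall>y \<in> X. R x y \<longrightarrow> y \<in> W}"
      unfolding rel_nabla_def by blast
  qed
next
  show "{x \<in> X. \<forall>y \<in> X. R x y \<longrightarrow> y \<in> W} \<subseteq> boxop X (rel_nabla X R) W"
    unfolding boxop_def by (auto simp: opens_def rel_nabla_def)
qed

lemma heyt_eq: "heyt X W1 W2 = {x \<in> X. x \<in> W1 \<longrightarrow> x \<in> W2}"
  unfolding heyt_def opens_def by auto

lemma simp_imp_rel_nabla:
  "simp_imp X (rel_nabla X R) W1 W2 = {x \<in> X. \<forall>y \<in> X. R x y \<longrightarrow> y \<in> W1 \<longrightarrow> y \<in> W2}"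
  unfolding simp_imp_def boxop_rel_nabla heyt_eq by blast

lemma in_class_rel_nabla:
  assumes refl: "L = iSTL_F \<Longrightarrow> \<forall>x \<in> X. R x x"
    and serial: "L = iSTL_wF \<Longrightarrow> \<forall>x \<in> X. \<exists>y \<in> X. R x y"
  shows "in_class L X (rel_nabla X R)"
proof -
  have "W \<subseteq> rel_nabla X R W" if "L = iSTL_F" "W \<subseteq> X" for W
    using refl[OF that(1)] that(2) unfolding rel_nabla_def by blast
  moreover have "rel_nabla X R W \<noteq> {}" if "L = iSTL_wF" "W \<subseteq> X" "W \<noteq> {}" for W
    using serial[OF that(1)] that(2,3) unfolding rel_nabla_def by blast
  ultimately show ?thesis
    unfolding in_class_def opens_def using union_pres_rel_nabla by blast
qed

subsection \<open>The canonical model\<close>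

lemma list_subset_image:
  assumes "set G \<subseteq> f ` T"
  obtains Gs where "set Gs \<subseteq> T" and "set G = f ` set Gs"
proof -
  obtain C where "C \<subseteq> T" "finite C" "set G = f ` C"
    using finite_subset_image[OF finite_set assms] by blast
  then show thesis
    using that finite_list[of C] by blast
qed

lemma prime_theory_Imp_iff:
  assumes T: "prime_theory L T"
  shows "Imp A B \<in> T \<longleftrightarrow> (\<forall>D. prime_theory L D \<longrightarrow> Nab ` T \<subseteq> D \<longrightarrow> A \<in> D \<longrightarrow> B \<in> D)"
proof
  assume "Imp A B \<in> T"
  show "\<forall>D. prime_theory L D \<longrightarrow> Nab ` T \<subseteq> D \<longrightarrow> A \<in> D \<longrightarrow> B \<in> D"
  proof (intro allI impI)
    fix D assume D: "prime_theory L D" "Nab ` T \<subseteq> D" "A \<in> D"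
    then have "set [A, Nab (Imp A B)] \<subseteq> D"
      using \<open>Imp A B \<in> T\<close> by auto
    then show "B \<in> D"
      by (rule prime_theory_closed[OF D(1) _ deriv_modus_ponens])
  qed
next
  assume R: "\<forall>D. prime_theory L D \<longrightarrow> Nab ` T \<subseteq> D \<longrightarrow> A \<in> D \<longrightarrow> B \<in> D"
  show "Imp A B \<in> T"
  proof (rule ccontr)
    assume "Imp A B \<notin> T"
    have "\<not> entails L (insert A (Nab ` T)) B"
    proof
      assume "entails L (insert A (Nab ` T)) B"
      then obtain G where G: "set G \<subseteq> insert A (Nab ` T)" "deriv L G B"
        unfolding entails_def by blast
      have "set (removeAll A G) \<subseteq> Nab ` T"
        using G(1) by auto
      then obtain Gs where Gs: "set Gs \<subseteq> T" "set (removeAll A G) = Nab ` set Gs"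
        by (rule list_subset_image)
      then have "deriv L (A # map Nab Gs) B"
        using G deriv_weaken[of L G B "A # map Nab Gs"] by auto
      then have "Imp A B \<in> T"
        using prime_theory_closed[OF T Gs(1) deriv.impR] by blast
      then show False
        using \<open>Imp A B \<notin> T\<close> by blast
    qed
    then obtain D where "prime_theory L D" "insert A (Nab ` T) \<subseteq> D" "B \<notin> D"
      by (rule lindenbaum_omitting)
    then show False
      using R by blast
  qed
qed

lemma prime_theory_Nab_iff:
  assumes D: "prime_theory L D"
  shows "Nab A \<in> D \<longleftrightarrow> (\<exists>T. prime_theory L T \<and> Nab ` T \<subseteq> D \<and> A \<in> T)"
proof
  assume "Nab A \<in> D"
  let ?I = "{E. Nab E \<notin> D}"
  have "Bot \<in> ?I"
    using prime_theory_closed[OF D, of "[Nab Bot]"] deriv_Nab_Bot prime_theory_Bot[OF D] by auto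
  moreover have "Or C E \<in> ?I" if "C \<in> ?I" "E \<in> ?I" for C E
    using prime_theory_closed[OF D, of "[Nab (Or C E)]" "Or (Nab C) (Nab E)"] deriv_Nab_Or
      prime_theory_Or[OF D] that by auto
  moreover have "\<not> entails L {A} E" if "E \<in> ?I" for E
  proof
    assume "entails L {A} E"
    then have "deriv L [A] E"
      unfolding entails_def using deriv_weaken[of L _ E "[A]"] by auto
    then show False
      using prime_theory_closed[OF D, of "[Nab A]"] deriv.nab \<open>Nab A \<in> D\<close> that by auto
  qed
  ultimately obtain T where "prime_theory L T" "{A} \<subseteq> T" "T \<inter> ?I = {}"
    by (rule lindenbaum)
  then show "\<exists>T. prime_theory L T \<and> Nab ` T \<subseteq> D \<and> A \<in> T"
    by blast
qed blast

lemma prime_theory_reflexive: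
  assumes "prime_theory iSTL_F T"
  shows "Nab ` T \<subseteq> T"
proof
  fix E assume "E \<in> Nab ` T"
  then obtain A where "A \<in> T" "E = Nab A"
    by blast
  moreover have "deriv iSTL_F [A] (Nab A)"
    by (rule deriv.schemeF[OF refl deriv.ax])
  ultimately show "E \<in> T"
    using prime_theory_closed[OF assms, of "[A]"] by simp
qed

lemma prime_theory_serial:
  assumes T: "prime_theory iSTL_wF T"
  obtains D where "prime_theory iSTL_wF D" and "Nab ` T \<subseteq> D"
proof -
  have "\<not> entails iSTL_wF (Nab ` T) Bot"
  proof
    assume "entails iSTL_wF (Nab ` T) Bot"
    then obtain G where G: "set G \<subseteq> Nab ` T" "deriv iSTL_wF G Bot"
      unfolding entails_def by blast
    obtain Gs where Gs: "set Gs \<subseteq> T" "set G = Nab ` set Gs"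
      using list_subset_image[OF G(1)] by blast
    have "deriv iSTL_wF [Nab (Ands Gs)] F" if "F \<in> set G" for F
      using that Gs(2) deriv.nab[OF deriv_AndsL] by auto
    then have "deriv iSTL_wF [Nab (Ands Gs)] Bot"
      using deriv_cut_all[OF _ deriv_append_left[OF G(2)], of "Nab (Ands Gs)"] by simp
    then have "deriv iSTL_wF [Ands Gs] Bot"
      by (rule deriv.schemewF[OF refl])
    moreover have "Ands Gs \<in> T"
      using prime_theory_closed[OF T Gs(1) deriv_AndsR] .
    ultimately show False
      using prime_theory_closed[OF T, of "[Ands Gs]"] prime_theory_Bot[OF T] by auto
  qed
  then show thesis
    using that lindenbaum_omitting by blast
qed

lemma canonical_truth:
  assumes prime: "\<And>x. x \<in> X \<Longrightarrow> prime_theory L (g x)"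
    and onto: "\<And>T. prime_theory L T \<Longrightarrow> \<exists>x \<in> X. g x = T"
  shows "eval X (rel_nabla X (\<lambda>x y. Nab ` g x \<subseteq> g y)) (\<lambda>p. {x \<in> X. Var p \<in> g x}) A
    = {x \<in> X. A \<in> g x}"
proof -
  have all_prime: "(\<forall>T. prime_theory L T \<longrightarrow> P T) \<longleftrightarrow> (\<forall>y \<in> X. P (g y))" for P
    using prime onto by blast
  have ex_prime: "(\<exists>T. prime_theory L T \<and> P T) \<longleftrightarrow> (\<exists>y \<in> X. P (g y))" for P
    using prime onto by blast
  show ?thesis
  proof (induction A)
    case (Imp A B)
    have "Imp A B \<in> g x \<longleftrightarrow> (\<forall>y \<in> X. Nab ` g x \<subseteq> g y \<longrightarrow> A \<in> g y \<longrightarrow> B \<in> g y)"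
      if "x \<in> X" for x
      unfolding prime_theory_Imp_iff[OF prime[OF that]] all_prime ..
    then show ?case
      by (auto simp: simp_imp_rel_nabla Imp.IH)
  next
    case (Nab A)
    have "Nab A \<in> g y \<longleftrightarrow> (\<exists>x \<in> X. Nab ` g x \<subseteq> g y \<and> A \<in> g x)" if "y \<in> X" for y
      unfolding prime_theory_Nab_iff[OF prime[OF that]] ex_prime ..
    then show ?case
      unfolding eval.simps Nab.IH unfolding rel_nabla_def by auto
  qed (auto simp: prime_theory_One[OF prime] prime_theory_Top[OF prime]
      prime_theory_Bot[OF prime] prime_theory_And[OF prime] prime_theory_Tens[OF prime]
      prime_theory_Or[OF prime])
qed

lemma in_class_canonical:
  assumes prime: "\<And>x. x \<in> X \<Longrightarrow> prime_theory L (g x)"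
    and onto: "\<And>T. prime_theory L T \<Longrightarrow> \<exists>x \<in> X. g x = T"
  shows "in_class L X (rel_nabla X (\<lambda>x y. Nab ` g x \<subseteq> g y))"
proof (rule in_class_rel_nabla)
  show "\<forall>x \<in> X. Nab ` g x \<subseteq> g x" if "L = iSTL_F"
  proof
    fix x assume "x \<in> X"
    then have "prime_theory iSTL_F (g x)"
      using prime that by simp
    then show "Nab ` g x \<subseteq> g x"
      by (rule prime_theory_reflexive)
  qed
  show "\<forall>x \<in> X. \<exists>y \<in> X. Nab ` g x \<subseteq> g y" if "L = iSTL_wF"
  proof
    fix x assume "x \<in> X"
    then have "prime_theory iSTL_wF (g x)"
      using prime that by simp
    then obtain D where "prime_theory iSTL_wF D" "Nab ` g x \<subseteq> D"
      by (rule prime_theory_serial)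
    then show "\<exists>y \<in> X. Nab ` g x \<subseteq> g y"
      using onto that by blast
  qed
qed

lemma ex_onto_countable_sets:
  fixes f :: "nat set \<Rightarrow> 'a" and P :: "'b::countable set set"
  assumes "inj f" and "range f \<subseteq> X" and "P \<noteq> {}"
  obtains g where "g ` X = P"
proof -
  define h where "h T = f (to_nat ` T)" for T :: "'b set"
  have "inj h"
  proof (rule injI)
    fix S T assume "h S = h T"
    then have "to_nat ` S = to_nat ` T"
      unfolding h_def using injD[OF \<open>inj f\<close>] by blast
    then show "S = T"
      by (simp add: inj_image_eq_iff[OF inj_to_nat])
  qed
  have "h T \<in> X" for T
    unfolding h_def using \<open>range f \<subseteq> X\<close> by blast
  obtain T0 where "T0 \<in> P"
    using \<open>P \<noteq> {}\<close> by blast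
  define g where "g x = (if x \<in> h ` P then inv_into P h x else T0)" for x
  have "g x \<in> P" for x
    unfolding g_def using \<open>T0 \<in> P\<close> inv_into_into[of x h P] by auto
  moreover have "T \<in> g ` X" if "T \<in> P" for T
  proof (rule image_eqI)
    show "T = g (h T)"
      unfolding g_def using that inv_into_f_f[OF inj_on_subset[OF \<open>inj h\<close>]] by auto
    show "h T \<in> X"
      by fact
  qed
  ultimately have "g ` X = P"
    by blast
  then show thesis
    by (rule that)
qed

lemma validD: "valid X L A \<Longrightarrow> in_class L X N \<Longrightarrow> (\<And>p. V p \<in> opens X) \<Longrightarrow> eval X N V A = X"
  unfolding valid_def by blast

lemma completeness:
  fixes f :: "nat set \<Rightarrow> 'a"
  assumes "inj f" and "range f \<subseteq> X" and valid: "valid X L A"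
  shows "provable L A"
proof (rule ccontr)
  assume "\<not> provable L A"
  then have "\<not> entails L {} A"
    unfolding provable_def entails_def by simp
  then obtain T0 where T0: "prime_theory L T0" "A \<notin> T0"
    using lindenbaum_omitting by blast
  then have "{T. prime_theory L T} \<noteq> {}"
    by blast
  then obtain g where g: "g ` X = {T. prime_theory L T}"
    by (rule ex_onto_countable_sets[OF \<open>inj f\<close> \<open>range f \<subseteq> X\<close>])
  then have prime: "\<And>x. x \<in> X \<Longrightarrow> prime_theory L (g x)"
    by blast
  have onto: "\<exists>x \<in> X. g x = T" if "prime_theory L T" for T
  proof -
    have "T \<in> g ` X"
      using g that by simp
    then show ?thesis
      by blast
  qed
  let ?R = "\<lambda>x y. Nab ` g x \<subseteq> g y"
  have "in_class L X (rel_nabla X ?R)"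
    using prime onto by (rule in_class_canonical)
  moreover have "\<And>p. {x \<in> X. Var p \<in> g x} \<in> opens X"
    by (auto simp: opens_def)
  ultimately have "eval X (rel_nabla X ?R) (\<lambda>p. {x \<in> X. Var p \<in> g x}) A = X"
    by (rule validD[OF valid])
  then have "{x \<in> X. A \<in> g x} = X"
    using canonical_truth[OF prime onto] by simp
  then show False
    using onto[OF T0(1)] T0(2) by blast
qed

theorem theorem8p11:
  fixes X :: "'a set"
  assumes card: "\<exists>f :: nat set \<Rightarrow> 'a. inj f \<and> range f \<subseteq> X"
  shows "\<forall>A. (valid X iSTL A \<longrightarrow> provable iSTL A)
          \<and> (valid X iSTL_F A \<longrightarrow> provable iSTL_F A)
          \<and> (valid X iSTL_wF A \<longrightarrow> provable iSTL_wF A)"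
  using card completeness by blast

end
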